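(* For every real number $x$, \[ |\cos x|\le \frac{2}{3}+\frac{7}{18}\cos 2x-\frac{1}{18}\cos 4x. \] *)

theory Defs
  imports Complex_Main
begin

end

theory Submission
  imports Defs
begin

text \<open>With \<open>a = \<bar>cos x\<bar>\<close> the right-hand side equals \<open>(2 + 11 a\<^sup>2 - 4 a\<^sup>4) / 9\<close>, and
  \<open>2 + 11 a\<^sup>2 - 4 a\<^sup>4 - 9 a = (1 - a) (2 a - 1)\<^sup>2 (a + 2)\<close>, which is nonnegative
  for \<open>0 \<le> a \<le> 1\<close> (with equality at \<open>a = 1\<close> and \<open>a = 1/2\<close>).\<close>

lemma cos_quadruple_cos: "cos (4 * x :: real) = 8 * cos x ^ 4 - 8 * cos x ^ 2 + 1"
proof -
  have "cos (4 * x) = 2 * cos (2 * x) ^ 2 - 1"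
    using cos_double_cos[of "2 * x"] by simp
  also have "\<dots> = 2 * (2 * cos x ^ 2 - 1) ^ 2 - 1"
    by (simp only: cos_double_cos)
  finally show ?thesis
    by (simp add: power2_eq_square power4_eq_xxxx algebra_simps)
qed

lemma quartic_ge_on_unit_interval:
  fixes a :: real
  assumes "0 \<le> a" "a \<le> 1"
  shows "9 * a \<le> 2 + 11 * a ^ 2 - 4 * a ^ 4"
proof -
  have "0 \<le> (1 - a) * (2 * a - 1) ^ 2 * (a + 2)"
    using assms by simp
  also have "\<dots> = 2 + 11 * a ^ 2 - 4 * a ^ 4 - 9 * a"
    by (simp add: power2_eq_square power4_eq_xxxx algebra_simps)
  finally show ?thesis by simp
qed

theorem lemma2p1:
  fixes x :: real
  shows "\<bar>cos x\<bar> \<le> 2/3 + 7/18 * cos (2*x) - 1/18 * cos (4*x)"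
proof -
  define a where "a = \<bar>cos x\<bar>"
  have "0 \<le> a" "a \<le> 1"
    by (simp_all add: a_def)
  have even_powers: "cos x ^ 2 = a ^ 2" "cos x ^ 4 = a ^ 4"
    by (simp_all add: a_def)
  have "2/3 + 7/18 * cos (2*x) - 1/18 * cos (4*x) = (2 + 11 * a ^ 2 - 4 * a ^ 4) / 9"
    unfolding cos_double_cos cos_quadruple_cos even_powers by (simp add: field_simps)
  moreover have "9 * a \<le> 2 + 11 * a ^ 2 - 4 * a ^ 4"
    using \<open>0 \<le> a\<close> \<open>a \<le> 1\<close> by (rule quartic_ge_on_unit_interval)
  ultimately show ?thesis
    by (simp add: a_def)
qed

end
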